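(* Each of the following families of graphs is feasible, i.e. for every integer $n \ge 1$ and every integer $m$ with $0 \le m \le \binom{n}{2}$ the family contains a graph with $n$ vertices and $m$ edges: (1) induced $K_{1,r}$-free graphs, for any fixed $r\geq 3$, where $K_{1,r}$ is the star with $r$ leaves; (2) induced $P_r$-free graphs, for any fixed $r \geq 3$, where $P_r$ is the path with $r$ edges; (3) induced $rK_2$-free graphs, for any fixed $r \geq 2$, where $rK_2$ is the disjoint union of $r$ edges; (4) chordal graphs.
   Context: All graphs are finite and simple. A graph is induced $H$-free if it has no induced subgraph isomorphic to $H$. A graph is chordal if every cycle of length at least 4 has a chord. *)

theory Defs
  imports Main
begin

definition simple_graph :: "nat set \<Rightarrow> (nat \<Rightarrow> nat \<Rightarrow> bool) \<Rightarrow> bool" where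
  "simple_graph V E \<longleftrightarrow> finite V \<and> (\<forall>u v. E u v \<longrightarrow> u \<in> V \<and> v \<in> V)
     \<and> (\<forall>u v. E u v \<longrightarrow> E v u) \<and> (\<forall>u. \<not> E u u)"

definition edge_set :: "nat set \<Rightarrow> (nat \<Rightarrow> nat \<Rightarrow> bool) \<Rightarrow> nat set set" where
  "edge_set V E = {{u, v} | u v. u \<in> V \<and> v \<in> V \<and> E u v}"

definition num_edges :: "nat set \<Rightarrow> (nat \<Rightarrow> nat \<Rightarrow> bool) \<Rightarrow> nat" where
  "num_edges V E = card (edge_set V E)"

definition has_induced :: "nat set \<Rightarrow> (nat \<Rightarrow> nat \<Rightarrow> bool) \<Rightarrow> nat set \<Rightarrow> (nat \<Rightarrow> nat \<Rightarrow> bool) \<Rightarrow> bool" where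
  "has_induced V E VH EH \<longleftrightarrow> (\<exists>f. inj_on f VH \<and> f ` VH \<subseteq> V \<and>
     (\<forall>u\<in>VH. \<forall>v\<in>VH. EH u v \<longleftrightarrow> E (f u) (f v)))"

definition induced_free :: "nat set \<Rightarrow> (nat \<Rightarrow> nat \<Rightarrow> bool) \<Rightarrow> nat set \<Rightarrow> (nat \<Rightarrow> nat \<Rightarrow> bool) \<Rightarrow> bool" where
  "induced_free V E VH EH \<longleftrightarrow> \<not> has_induced V E VH EH"

definition star_V :: "nat \<Rightarrow> nat set" where "star_V r = {0..r}"
definition star_E :: "nat \<Rightarrow> nat \<Rightarrow> nat \<Rightarrow> bool" where
  "star_E r u v \<longleftrightarrow> u \<in> {0..r} \<and> v \<in> {0..r} \<and> u \<noteq> v \<and> (u = 0 \<or> v = 0)"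

definition path_V :: "nat \<Rightarrow> nat set" where "path_V r = {0..r}"
definition path_E :: "nat \<Rightarrow> nat \<Rightarrow> nat \<Rightarrow> bool" where
  "path_E r u v \<longleftrightarrow> u \<in> {0..r} \<and> v \<in> {0..r} \<and> (v = Suc u \<or> u = Suc v)"

text \<open>rK_2: vertices 0..2r-1, edges {2i, 2i+1}.\<close>
definition matching_V :: "nat \<Rightarrow> nat set" where "matching_V r = {0..<2*r}"
definition matching_E :: "nat \<Rightarrow> nat \<Rightarrow> nat \<Rightarrow> bool" where
  "matching_E r u v \<longleftrightarrow> u < 2*r \<and> v < 2*r \<and> u \<noteq> v \<and> u div 2 = v div 2"

definition is_cycle :: "nat set \<Rightarrow> (nat \<Rightarrow> nat \<Rightarrow> bool) \<Rightarrow> nat list \<Rightarrow> bool" where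
  "is_cycle V E vs \<longleftrightarrow> length vs \<ge> 3 \<and> distinct vs \<and> set vs \<subseteq> V \<and>
     (\<forall>i < length vs. E (vs ! i) (vs ! ((i + 1) mod length vs)))"

definition has_chord :: "(nat \<Rightarrow> nat \<Rightarrow> bool) \<Rightarrow> nat list \<Rightarrow> bool" where
  "has_chord E vs \<longleftrightarrow> (\<exists>i < length vs. \<exists>j < length vs.
     j \<noteq> (i + 1) mod length vs \<and> i \<noteq> (j + 1) mod length vs \<and> i \<noteq> j \<and>
     E (vs ! i) (vs ! j))"

definition chordal :: "nat set \<Rightarrow> (nat \<Rightarrow> nat \<Rightarrow> bool) \<Rightarrow> bool" where
  "chordal V E \<longleftrightarrow> (\<forall>vs. is_cycle V E vs \<and> length vs \<ge> 4 \<longrightarrow> has_chord E vs)"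

definition feasible :: "(nat set \<Rightarrow> (nat \<Rightarrow> nat \<Rightarrow> bool) \<Rightarrow> bool) \<Rightarrow> bool" where
  "feasible P \<longleftrightarrow> (\<forall>n \<ge> 1. \<forall>m \<le> n choose 2. \<exists>V E.
     simple_graph V E \<and> card V = n \<and> num_edges V E = m \<and> P V E)"

end

theory Submission
  imports Defs
begin

text \<open>
  On the vertex set {0..<n} take as edges the first m pairs in colexicographic order, i.e. the
  pairs {u, v} with u < v ordered by v and then by u. If {x, y} is an edge and M = max x y,
  then every pair of vertices below M precedes {x, y} and is therefore an edge as well.
  Consequently, in any induced subgraph whose largest vertex is not isolated, deleting that
  vertex leaves a complete graph. This is impossible in K_{1,r} (r \<ge> 3), P_r (r \<ge> 3) and
  rK_2 (r \<ge> 2), which have no isolated vertex and a non-edge avoiding any given vertex; and on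
  a cycle of length at least 4 it yields a chord.
\<close>

lemma choose_two_Suc: "Suc v choose 2 = (v choose 2) + v"
  by (simp add: numeral_2_eq_2)

text \<open>The position of {u, v} in the colexicographic order of the 2-subsets of the naturals.\<close>
definition colex_rank :: "nat \<Rightarrow> nat \<Rightarrow> nat" where
  "colex_rank u v = (max u v choose 2) + min u v"

lemma colex_rank_commute: "colex_rank u v = colex_rank v u"
  by (simp add: colex_rank_def max.commute min.commute)

lemma colex_rank_bounds:
  assumes "u < v" shows "v choose 2 \<le> colex_rank u v" "colex_rank u v < Suc v choose 2"
  using assms by (simp_all add: colex_rank_def choose_two_Suc)

lemma colex_rank_less_if_max_less:
  assumes "u < v" "max p q < v" "p \<noteq> q"
  shows "colex_rank p q < colex_rank u v"
proof -
  have "colex_rank p q < Suc (max p q) choose 2"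
    using colex_rank_bounds(2)[of "min p q" "max p q"] \<open>p \<noteq> q\<close>
    by (simp add: colex_rank_def)
  also have "\<dots> \<le> v choose 2"
    using assms by (intro binomial_right_mono) auto
  also have "\<dots> \<le> colex_rank u v"
    using colex_rank_bounds(1)[OF \<open>u < v\<close>] .
  finally show ?thesis .
qed

lemma colex_rank_inj:
  assumes "u < v" "u' < v'" "colex_rank u v = colex_rank u' v'"
  shows "u = u' \<and> v = v'"
proof -
  have "v = v'"
    using colex_rank_less_if_max_less[of u v u' v'] colex_rank_less_if_max_less[of u' v' u v] assms
    by (metis max.strict_order_iff max_less_iff_conj nat_neq_iff)
  then show ?thesis using assms by (simp add: colex_rank_def)
qed

lemma colex_rank_surj:
  assumes "c < n choose 2" shows "\<exists>u v. u < v \<and> v < n \<and> colex_rank u v = c"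
  using assms
proof (induction n)
  case 0 then show ?case by (simp add: binomial_eq_0)
next
  case (Suc n)
  show ?case
  proof (cases "c < n choose 2")
    case True
    then show ?thesis using Suc.IH less_Suc_eq by blast
  next
    case False
    then have "c - (n choose 2) < n" "colex_rank (c - (n choose 2)) n = c"
      using Suc.prems by (simp_all add: colex_rank_def choose_two_Suc)
    then show ?thesis by blast
  qed
qed

definition colex_graph :: "nat \<Rightarrow> nat \<Rightarrow> nat \<Rightarrow> nat \<Rightarrow> bool" where
  "colex_graph n m u v \<longleftrightarrow> u < n \<and> v < n \<and> u \<noteq> v \<and> colex_rank u v < m"

lemma simple_graph_colex_graph: "simple_graph {0..<n} (colex_graph n m)"
  by (auto simp: simple_graph_def colex_graph_def colex_rank_commute)

lemma edge_set_colex_graph: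
  "edge_set {0..<n} (colex_graph n m) =
     (\<lambda>(u, v). {u, v}) ` {(u, v). u < v \<and> v < n \<and> colex_rank u v < m}"
    (is "_ = (\<lambda>(u, v). {u, v}) ` ?pairs")
proof (intro equalityI subsetI)
  fix e assume "e \<in> edge_set {0..<n} (colex_graph n m)"
  then obtain u v where e: "e = {u, v}" and "colex_graph n m u v"
    unfolding edge_set_def by blast
  then have uv: "u < n" "v < n" "u \<noteq> v" "colex_rank u v < m"
    by (simp_all add: colex_graph_def)
  show "e \<in> (\<lambda>(u, v). {u, v}) ` ?pairs"
  proof (cases "u < v")
    case True
    then show ?thesis
      using e uv by (intro image_eqI[of _ _ "(u, v)"]) simp_all
  next
    case False
    then show ?thesis
      using e uv
      by (intro image_eqI[of _ _ "(v, u)"]) (simp_all add: insert_commute colex_rank_commute)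
  qed
next
  fix e assume "e \<in> (\<lambda>(u, v). {u, v}) ` ?pairs"
  then obtain u v where "e = {u, v}" "u < v" "v < n" "colex_rank u v < m"
    by auto
  then have "e = {u, v} \<and> u \<in> {0..<n} \<and> v \<in> {0..<n} \<and> colex_graph n m u v"
    by (simp add: colex_graph_def)
  then show "e \<in> edge_set {0..<n} (colex_graph n m)"
    unfolding edge_set_def by blast
qed

lemma num_edges_colex_graph:
  assumes "m \<le> n choose 2"
  shows "num_edges {0..<n} (colex_graph n m) = m"
proof -
  let ?pairs = "{(u, v). u < v \<and> v < n \<and> colex_rank u v < m}"
  have inj_doubleton: "inj_on (\<lambda>(u, v). {u, v}) ?pairs"
    by (auto intro!: inj_onI simp: doubleton_eq_iff)
  have inj_rank: "inj_on (\<lambda>(u, v). colex_rank u v) ?pairs"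
    by (auto intro!: inj_onI dest: colex_rank_inj)
  have rank_image: "(\<lambda>(u, v). colex_rank u v) ` ?pairs = {..<m}"
  proof (intro equalityI subsetI)
    fix c assume "c \<in> {..<m}"
    then obtain u v where "u < v" "v < n" "colex_rank u v = c"
      using assms colex_rank_surj by (metis lessThan_iff order_less_le_trans)
    then show "c \<in> (\<lambda>(u, v). colex_rank u v) ` ?pairs"
      using \<open>c \<in> {..<m}\<close> by force
  qed auto
  have "num_edges {0..<n} (colex_graph n m) = card ?pairs"
    unfolding num_edges_def edge_set_colex_graph using inj_doubleton by (rule card_image)
  also have "\<dots> = card ((\<lambda>(u, v). colex_rank u v) ` ?pairs)"
    using inj_rank by (rule card_image[symmetric])
  also have "\<dots> = m"
    by (simp add: rank_image)
  finally show ?thesis .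
qed

lemma colex_graph_below_edge:
  assumes "colex_graph n m x y" "p \<noteq> q" "p < max x y" "q < max x y"
  shows "colex_graph n m p q"
proof -
  have "colex_rank p q < colex_rank (min x y) (max x y)"
    using assms by (intro colex_rank_less_if_max_less) (auto simp: colex_graph_def)
  then show ?thesis
    using assms by (auto simp: colex_graph_def colex_rank_def max_def min_def split: if_splits)
qed

lemma feasible_if_colex_graphs:
  assumes "\<And>n m. m \<le> n choose 2 \<Longrightarrow> P {0..<n} (colex_graph n m)"
  shows "feasible P"
  unfolding feasible_def
  using simple_graph_colex_graph num_edges_colex_graph assms by fastforce

lemma colex_graph_induced_free:
  assumes "VH \<noteq> {}"
    and no_isolated: "\<And>x. x \<in> VH \<Longrightarrow> \<exists>y\<in>VH. EH x y"
    and deletions_not_complete: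
      "\<And>x. x \<in> VH \<Longrightarrow> \<exists>p\<in>VH. \<exists>q\<in>VH. p \<noteq> x \<and> q \<noteq> x \<and> p \<noteq> q \<and> \<not> EH p q"
  shows "induced_free {0..<n} (colex_graph n m) VH EH"
  unfolding induced_free_def has_induced_def
proof clarify
  fix f assume inj: "inj_on f VH" and "f ` VH \<subseteq> {0..<n}"
    and iso: "\<forall>u\<in>VH. \<forall>v\<in>VH. EH u v = colex_graph n m (f u) (f v)"
  have fin: "finite (f ` VH)"
    using \<open>f ` VH \<subseteq> {0..<n}\<close> by (rule finite_subset) simp
  then have "Max (f ` VH) \<in> f ` VH"
    using \<open>VH \<noteq> {}\<close> by simp
  then obtain x where x: "x \<in> VH" "f x = Max (f ` VH)"
    by auto
  have below_x: "f v < f x" if "v \<in> VH" "v \<noteq> x" for v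
  proof -
    have "f v \<le> f x"
      using fin that(1) x(2) by simp
    moreover have "f v \<noteq> f x"
      using inj that x(1) by (auto dest: inj_onD)
    ultimately show ?thesis
      by simp
  qed
  obtain y where "y \<in> VH" "EH x y"
    using no_isolated x(1) by blast
  then have edge: "colex_graph n m (f x) (f y)"
    using iso x(1) by blast
  obtain p q where pq: "p \<in> VH" "q \<in> VH" "p \<noteq> x" "q \<noteq> x" "p \<noteq> q" "\<not> EH p q"
    using deletions_not_complete x(1) by blast
  have "colex_graph n m (f p) (f q)"
    using pq below_x inj
    by (intro colex_graph_below_edge[OF edge]) (auto dest: inj_onD simp: less_max_iff_disj)
  then show False
    using iso pq by blast
qed

lemma colex_graph_star_free:
  assumes "r \<ge> 3"
  shows "induced_free {0..<n} (colex_graph n m) (star_V r) (star_E r)"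
proof (rule colex_graph_induced_free)
  show "\<exists>y\<in>star_V r. star_E r x y" if "x \<in> star_V r" for x
    using that assms
    by (intro bexI[of _ "if x = 0 then 1 else 0"]) (auto simp: star_V_def star_E_def)
  show "\<exists>p\<in>star_V r. \<exists>q\<in>star_V r. p \<noteq> x \<and> q \<noteq> x \<and> p \<noteq> q \<and> \<not> star_E r p q"
    if "x \<in> star_V r" for x
    using that assms
    by (intro bexI[of _ "if x = 1 then 3 else 1"] bexI[of _ "if x = 2 then 3 else 2"])
      (auto simp: star_V_def star_E_def)
qed (simp add: star_V_def)

lemma colex_graph_path_free:
  assumes "r \<ge> 3"
  shows "induced_free {0..<n} (colex_graph n m) (path_V r) (path_E r)"
proof (rule colex_graph_induced_free)
  show "\<exists>y\<in>path_V r. path_E r x y" if "x \<in> path_V r" for x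
    using that assms
    by (intro bexI[of _ "if x = 0 then 1 else x - 1"]) (auto simp: path_V_def path_E_def)
  show "\<exists>p\<in>path_V r. \<exists>q\<in>path_V r. p \<noteq> x \<and> q \<noteq> x \<and> p \<noteq> q \<and> \<not> path_E r p q"
    if "x \<in> path_V r" for x
    using that assms
    by (intro bexI[of _ "if x \<in> {0, 2} then 1 else 0"] bexI[of _ "if x \<in> {0, 2} then 3 else 2"])
      (auto simp: path_V_def path_E_def)
qed (simp add: path_V_def)

lemma colex_graph_matching_free:
  assumes "r \<ge> 2"
  shows "induced_free {0..<n} (colex_graph n m) (matching_V r) (matching_E r)"
proof (rule colex_graph_induced_free)
  show "\<exists>y\<in>matching_V r. matching_E r x y" if "x \<in> matching_V r" for x
    using that assms
    by (intro bexI[of _ "if even x then x + 1 else x - 1"])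
      (auto simp: matching_V_def matching_E_def elim!: oddE)
  show "\<exists>p\<in>matching_V r. \<exists>q\<in>matching_V r. p \<noteq> x \<and> q \<noteq> x \<and> p \<noteq> q \<and> \<not> matching_E r p q"
    if "x \<in> matching_V r" for x
    using that assms
    by (intro bexI[of _ "if x \<in> {0, 2} then 1 else 0"] bexI[of _ "if x \<in> {0, 2} then 3 else 2"])
      (auto simp: matching_V_def matching_E_def)
qed (use assms in \<open>simp add: matching_V_def\<close>)

lemma has_chord_if_complete_but_one:
  assumes "length vs \<ge> 4" "i < length vs"
    and complete: "\<And>p q. p < length vs \<Longrightarrow> q < length vs \<Longrightarrow> p \<noteq> i \<Longrightarrow> q \<noteq> i \<Longrightarrow> p \<noteq> q
        \<Longrightarrow> E (vs ! p) (vs ! q)"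
  shows "has_chord E vs"
proof (cases "i \<in> {0, 2}")
  case True
  then have "E (vs ! 1) (vs ! 3)"
    using assms(1) complete[of 1 3] by auto
  moreover have "4 mod length vs \<noteq> 1"
    using assms(1) by (cases "length vs = 4") auto
  ultimately show ?thesis
    using assms(1) unfolding has_chord_def by (intro exI[of _ 1]) (auto intro!: exI[of _ 3])
next
  case False
  then have "E (vs ! 0) (vs ! 2)"
    using assms(1) complete[of 0 2] by fastforce
  then show ?thesis
    using assms(1) unfolding has_chord_def by (intro exI[of _ 0]) (auto intro!: exI[of _ 2])
qed

lemma colex_graph_chordal: "chordal {0..<n} (colex_graph n m)"
  unfolding chordal_def
proof clarify
  fix vs assume cycle: "is_cycle {0..<n} (colex_graph n m) vs" and "length vs \<ge> 4"
  then have "Max (set vs) \<in> set vs"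
    by (intro Max_in) auto
  then obtain i where i: "i < length vs" "vs ! i = Max (set vs)"
    by (auto simp: in_set_conv_nth)
  have "distinct vs"
    using cycle by (simp add: is_cycle_def)
  then have below_i: "vs ! p < vs ! i" if "p < length vs" "p \<noteq> i" for p
    using that i by (metis Max_ge List.finite_set nth_eq_iff_index_eq nth_mem order_le_neq_trans)
  have edge_at_i: "colex_graph n m (vs ! i) (vs ! ((i + 1) mod length vs))"
    using cycle i(1) by (simp add: is_cycle_def)
  show "has_chord (colex_graph n m) vs"
  proof (rule has_chord_if_complete_but_one[OF \<open>length vs \<ge> 4\<close> i(1)])
    fix p q assume "p < length vs" "q < length vs" "p \<noteq> i" "q \<noteq> i" "p \<noteq> q"
    then show "colex_graph n m (vs ! p) (vs ! q)"
      using colex_graph_below_edge[OF edge_at_i] below_i \<open>distinct vs\<close>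
      by (simp add: nth_eq_iff_index_eq less_max_iff_disj)
  qed
qed

theorem mainTheorem4:
  shows "(\<forall>r \<ge> 3. feasible (\<lambda>V E. induced_free V E (star_V r) (star_E r)))
       \<and> (\<forall>r \<ge> 3. feasible (\<lambda>V E. induced_free V E (path_V r) (path_E r)))
       \<and> (\<forall>r \<ge> 2. feasible (\<lambda>V E. induced_free V E (matching_V r) (matching_E r)))
       \<and> feasible chordal"
  by (intro conjI allI impI feasible_if_colex_graphs colex_graph_star_free colex_graph_path_free
      colex_graph_matching_free colex_graph_chordal)

end
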